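(* There exists a linear symplectic coordinate transform generated by an orthogonal rotation matrix $T\in SO(2)$ (acting as $\bar W=TW$, $\bar w=Tw$) depending only on the masses $m=(m_1,m_2,m_3)$ and the charges $e_1,e_2,e_3$ such that under this transformation the lower right $2\times2$ sub-matrix of $B_2(\theta)$ in the system $\begin{pmatrix}\dot{\bar W}\\ \dot{\bar w}\end{pmatrix}=JB_2(\theta)\begin{pmatrix}\bar W\\ \bar w\end{pmatrix}$ is diagonalized, and $B_2(\theta)$ becomes $$\bar B_2(\theta)=\begin{pmatrix}1&0&0&1\\0&1&-1&0\\0&-1&\frac{2e\cos\theta-1-\sqrt{9-\beta}}{2(1+e\cos\theta)}&0\\1&0&0&\frac{2e\cos\theta-1+\sqrt{9-\beta}}{2(1+e\cos\theta)}\end{pmatrix},$$ where $\beta=36(m_2m_3\sin^2\theta_1+m_3m_1\sin^2\theta_2+m_1m_2\sin^2\theta_3)$.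
   Context: Charged planar three-body problem with masses $m_i>0$, $m_1+m_2+m_3=1$, non-collinear central configuration with inner angles $\theta_1,\theta_2,\theta_3$, eccentricity $e\in[0,1)$, true anomaly $\theta$. $I$ is the $2\times2$ identity and $J=\begin{pmatrix}0&-1\\1&0\end{pmatrix}$ (the standard symplectic matrix on $\mathbb{R}^4$ in the ODE). The essential part of the linearized system at the elliptic triangle solution has coefficient matrix $B_2(\theta)=\begin{pmatrix}I&-J\\ J&\frac{e\cos\theta\, I+\tilde D}{1+e\cos\theta}\end{pmatrix}$ with $\tilde D=\begin{pmatrix}1-3d_1&-3d_2\\-3d_2&1-3d_4\end{pmatrix}$, where $d_1=m_1\cos^2(\theta_2-\theta_3)+m_2\cos^2\theta_2+m_3\cos^2\theta_3$, $d_2=m_1\cos(\theta_2-\theta_3)\sin(\theta_2-\theta_3)+m_2\cos\theta_2\sin\theta_2-m_3\cos\theta_3\sin\theta_3$, $d_4=m_1\sin^2(\theta_2-\theta_3)+m_2\sin^2\theta_2+m_3\sin^2\theta_3$. *)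

theory Defs
  imports Complex_Main "Jordan_Normal_Form.Determinant"
begin

definition mat2 :: "real \<Rightarrow> real \<Rightarrow> real \<Rightarrow> real \<Rightarrow> real mat" where
  "mat2 a b c d = mat_of_rows_list 2 [[a, b], [c, d]]"

definition J2 :: "real mat" where
  "J2 = mat2 0 (-1) 1 0"

definition J4 :: "real mat" where
  "J4 = four_block_mat (0\<^sub>m 2 2) (- 1\<^sub>m 2) (1\<^sub>m 2) (0\<^sub>m 2 2)"

definition d1 :: "real \<Rightarrow> real \<Rightarrow> real \<Rightarrow> real \<Rightarrow> real \<Rightarrow> real" where
  "d1 m1 m2 m3 th2 th3 = m1 * (cos (th2 - th3))^2 + m2 * (cos th2)^2 + m3 * (cos th3)^2"

definition d2 :: "real \<Rightarrow> real \<Rightarrow> real \<Rightarrow> real \<Rightarrow> real \<Rightarrow> real" where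
  "d2 m1 m2 m3 th2 th3 = m1 * cos (th2 - th3) * sin (th2 - th3) + m2 * cos th2 * sin th2
      - m3 * cos th3 * sin th3"

definition d4 :: "real \<Rightarrow> real \<Rightarrow> real \<Rightarrow> real \<Rightarrow> real \<Rightarrow> real" where
  "d4 m1 m2 m3 th2 th3 = m1 * (sin (th2 - th3))^2 + m2 * (sin th2)^2 + m3 * (sin th3)^2"

definition Dtilde :: "real \<Rightarrow> real \<Rightarrow> real \<Rightarrow> real \<Rightarrow> real \<Rightarrow> real mat" where
  "Dtilde m1 m2 m3 th2 th3 =
     mat2 (1 - 3 * d1 m1 m2 m3 th2 th3) (- 3 * d2 m1 m2 m3 th2 th3)
          (- 3 * d2 m1 m2 m3 th2 th3) (1 - 3 * d4 m1 m2 m3 th2 th3)"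

text \<open>Coefficient matrix B_2(theta) of the essential part; e = eccentricity, th = true anomaly.\<close>
definition B2 :: "real \<Rightarrow> real \<Rightarrow> real \<Rightarrow> real \<Rightarrow> real \<Rightarrow> real \<Rightarrow> real \<Rightarrow> real mat" where
  "B2 m1 m2 m3 th2 th3 e th =
     four_block_mat (1\<^sub>m 2) (- J2) J2
       ((1 / (1 + e * cos th)) \<cdot>\<^sub>m ((e * cos th) \<cdot>\<^sub>m 1\<^sub>m 2 + Dtilde m1 m2 m3 th2 th3))"

definition beta :: "real \<Rightarrow> real \<Rightarrow> real \<Rightarrow> real \<Rightarrow> real \<Rightarrow> real \<Rightarrow> real" where
  "beta m1 m2 m3 th1 th2 th3 =
     36 * (m2 * m3 * (sin th1)^2 + m3 * m1 * (sin th2)^2 + m1 * m2 * (sin th3)^2)"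

definition B2bar :: "real \<Rightarrow> real \<Rightarrow> real \<Rightarrow> real \<Rightarrow> real \<Rightarrow> real \<Rightarrow> real \<Rightarrow> real \<Rightarrow> real mat" where
  "B2bar m1 m2 m3 th1 th2 th3 e th =
     mat_of_rows_list 4
      [[1, 0, 0, 1],
       [0, 1, -1, 0],
       [0, -1, (2 * e * cos th - 1 - sqrt (9 - beta m1 m2 m3 th1 th2 th3)) / (2 * (1 + e * cos th)), 0],
       [1, 0, 0, (2 * e * cos th - 1 + sqrt (9 - beta m1 m2 m3 th1 th2 th3)) / (2 * (1 + e * cos th))]]"

definition blockdiag2 :: "real mat \<Rightarrow> real mat" where
  "blockdiag2 T = four_block_mat T (0\<^sub>m 2 2) (0\<^sub>m 2 2) T"

end

theory Submission
  imports Defs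
begin

text \<open>The lower right block of \<open>B2\<close> is an affine function of the symmetric matrix \<open>Dtilde\<close>,
  whose trace is \<open>-1\<close> because \<open>d1 + d4 = m1 + m2 + m3 = 1\<close>, and whose determinant is
  \<open>\<beta>/4 - 2\<close>: by a weighted Lagrange identity together with \<open>th1 + th2 + th3 = pi\<close> one gets
  \<open>d1 d4 - d2\<^sup>2 = \<beta>/36\<close>. Hence its eigenvalues are \<open>(-1 \<plusminus> sqrt (9 - \<beta>))/2\<close>, and a rotation
  \<open>T\<close> through half the angle of the vector \<open>(c - a, -2b)\<close> diagonalises it. Conjugating by
  \<open>diag(T, T)\<close> acts blockwise; it fixes the identity and \<open>J\<close> blocks because \<open>T\<close> is a rotation,
  and \<open>diag(T, T)\<close> is symplectic because \<open>T\<close> is orthogonal.\<close>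

lemma mat2_carrier [simp]: "mat2 a b c d \<in> carrier_mat 2 2"
  unfolding mat2_def mat_of_rows_list_def carrier_mat_def by (simp add: numeral_eq_Suc)

lemma dim_mat2 [simp]: "dim_row (mat2 a b c d) = 2" "dim_col (mat2 a b c d) = 2"
  using mat2_carrier[of a b c d] unfolding carrier_mat_def by auto

lemma index_mat2 [simp]:
  "mat2 a b c d $$ (0, 0) = a" "mat2 a b c d $$ (0, 1) = b"
  "mat2 a b c d $$ (1, 0) = c" "mat2 a b c d $$ (1, 1) = d"
  unfolding mat2_def mat_of_rows_list_def by auto

lemmas index_mat2_Suc [simp] = index_mat2[unfolded One_nat_def]

lemma mat2_eqI:
  assumes "A \<in> carrier_mat 2 2"
    and "A $$ (0, 0) = a" "A $$ (0, 1) = b" "A $$ (1, 0) = c" "A $$ (1, 1) = d"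
  shows "A = mat2 a b c d"
proof (rule eq_matI)
  fix i j assume "i < dim_row (mat2 a b c d)" "j < dim_col (mat2 a b c d)"
  then have "i \<in> {0, 1}" "j \<in> {0, 1}" by auto
  then show "A $$ (i, j) = mat2 a b c d $$ (i, j)" using assms by auto
qed (use assms in auto)

lemma mat2_eq_iff: "mat2 a b c d = mat2 a' b' c' d' \<longleftrightarrow> a = a' \<and> b = b' \<and> c = c' \<and> d = d'"
  by (metis index_mat2)

lemma one_mat2: "(1\<^sub>m 2 :: real mat) = mat2 1 0 0 1"
  by (rule mat2_eqI) auto

lemma uminus_mat2: "- mat2 a b c d = mat2 (- a) (- b) (- c) (- d)"
  by (rule mat2_eqI) auto

lemma smult_mat2: "k \<cdot>\<^sub>m mat2 a b c d = mat2 (k * a) (k * b) (k * c) (k * d)"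
  by (rule mat2_eqI) auto

lemma add_mat2: "mat2 a b c d + mat2 a' b' c' d' = mat2 (a + a') (b + b') (c + c') (d + d')"
  by (rule mat2_eqI) auto

lemma transpose_mat2: "transpose_mat (mat2 a b c d) = mat2 a c b d"
  by (rule mat2_eqI) auto

lemma mult_mat2:
  "mat2 a b c d * mat2 a' b' c' d'
     = mat2 (a * a' + b * c') (a * b' + b * d') (c * a' + d * c') (c * b' + d * d')"
  by (rule mat2_eqI) (auto simp: scalar_prod_def numeral_eq_Suc atLeast0LessThan lessThan_Suc)

lemma det_mat2: "det (mat2 a b c d) = a * d - b * c"
proof -
  have minor: "det (mat_delete (mat2 a b c d) i 0) = mat_delete (mat2 a b c d) i 0 $$ (0, 0)" for i
    by (subst det_upper_triangular[of _ 1])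
       (auto simp: upper_triangular_def diag_mat_def mat_delete_carrier)
  have "det (mat2 a b c d) = (\<Sum>i<2. mat2 a b c d $$ (i, 0) * cofactor (mat2 a b c d) i 0)"
    by (rule laplace_expansion_column) auto
  also have "\<dots> = a * d - c * b"
    by (simp add: numeral_2_eq_2 cofactor_def minor) (simp add: mat_delete_def)
  finally show ?thesis by simp
qed

lemma block_diagonal_congruence:
  fixes T A B C D :: "'a :: comm_ring_1 mat"
  assumes T: "T \<in> carrier_mat n n"
    and ABCD: "A \<in> carrier_mat n n" "B \<in> carrier_mat n n" "C \<in> carrier_mat n n" "D \<in> carrier_mat n n"
  shows "four_block_mat T (0\<^sub>m n n) (0\<^sub>m n n) T * four_block_mat A B C D
           * transpose_mat (four_block_mat T (0\<^sub>m n n) (0\<^sub>m n n) T)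
         = four_block_mat (T * A * transpose_mat T) (T * B * transpose_mat T)
             (T * C * transpose_mat T) (T * D * transpose_mat T)"
proof -
  have Tt: "transpose_mat T \<in> carrier_mat n n" using T by simp
  have "four_block_mat T (0\<^sub>m n n) (0\<^sub>m n n) T * four_block_mat A B C D
        = four_block_mat (T * A) (T * B) (T * C) (T * D)"
    using T ABCD by (subst mult_four_block_mat[of _ n n _ n _ n _ _ n _ n]) auto
  moreover have "transpose_mat (four_block_mat T (0\<^sub>m n n) (0\<^sub>m n n) T)
        = four_block_mat (transpose_mat T) (0\<^sub>m n n) (0\<^sub>m n n) (transpose_mat T)"
    using T by (subst transpose_four_block_mat) auto
  ultimately show ?thesis
    using T Tt ABCD by (simp add: mult_four_block_mat[of _ n n _ n _ n _ _ n _ n])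
qed

lemma block_diagonal_symplectic:
  fixes T :: "'a :: comm_ring_1 mat"
  assumes T: "T \<in> carrier_mat n n" and orth: "transpose_mat T * T = 1\<^sub>m n"
  shows "transpose_mat (four_block_mat T (0\<^sub>m n n) (0\<^sub>m n n) T)
           * four_block_mat (0\<^sub>m n n) (- 1\<^sub>m n) (1\<^sub>m n) (0\<^sub>m n n)
           * four_block_mat T (0\<^sub>m n n) (0\<^sub>m n n) T
         = four_block_mat (0\<^sub>m n n) (- 1\<^sub>m n) (1\<^sub>m n) (0\<^sub>m n n)"
proof -
  have Tt: "transpose_mat T \<in> carrier_mat n n" using T by simp
  have "transpose_mat (four_block_mat T (0\<^sub>m n n) (0\<^sub>m n n) T)
        = four_block_mat (transpose_mat T) (0\<^sub>m n n) (0\<^sub>m n n) (transpose_mat T)"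
    using T by (subst transpose_four_block_mat) auto
  moreover have "- 0\<^sub>m n n = (0\<^sub>m n n :: 'a mat)"
    by (rule eq_matI) auto
  ultimately show ?thesis
    using T Tt orth by (simp add: mult_four_block_mat[of _ n n _ n _ n _ _ n _ n])
qed

lemma orthogonal_congruence_affine:
  fixes T D :: "'a :: comm_ring_1 mat"
  assumes T: "T \<in> carrier_mat n n" and orth: "T * transpose_mat T = 1\<^sub>m n"
    and D: "D \<in> carrier_mat n n"
  shows "T * (k \<cdot>\<^sub>m (x \<cdot>\<^sub>m 1\<^sub>m n + D)) * transpose_mat T
         = k \<cdot>\<^sub>m (x \<cdot>\<^sub>m 1\<^sub>m n + T * D * transpose_mat T)"
proof -
  have Tt: "transpose_mat T \<in> carrier_mat n n" using T by simp
  have M: "x \<cdot>\<^sub>m 1\<^sub>m n + D \<in> carrier_mat n n" using D by simp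
  have "T * (k \<cdot>\<^sub>m (x \<cdot>\<^sub>m 1\<^sub>m n + D)) * transpose_mat T
        = k \<cdot>\<^sub>m (T * (x \<cdot>\<^sub>m 1\<^sub>m n + D) * transpose_mat T)"
    using T Tt M by (simp add: mult_smult_distrib[OF T M] mult_smult_assoc_mat[of _ n n _ n])
  also have "T * (x \<cdot>\<^sub>m 1\<^sub>m n + D) = x \<cdot>\<^sub>m T + T * D"
    using T D
    by (simp add: mult_add_distrib_mat[OF T, of "x \<cdot>\<^sub>m 1\<^sub>m n" n D] mult_smult_distrib[OF T one_carrier_mat])
  also have "(x \<cdot>\<^sub>m T + T * D) * transpose_mat T
        = x \<cdot>\<^sub>m (T * transpose_mat T) + T * D * transpose_mat T"
    using T D Tt by (simp add: add_mult_distrib_mat[of _ n n] mult_smult_assoc_mat[of _ n n _ n])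
  finally show ?thesis using orth by simp
qed

definition rot2 :: "real \<Rightarrow> real mat" where
  "rot2 \<phi> = mat2 (cos \<phi>) (sin \<phi>) (- sin \<phi>) (cos \<phi>)"

lemma rot2_carrier [simp]: "rot2 \<phi> \<in> carrier_mat 2 2"
  by (simp add: rot2_def)

lemma dim_rot2 [simp]: "dim_row (rot2 \<phi>) = 2" "dim_col (rot2 \<phi>) = 2"
  by (simp_all add: rot2_def)

lemma transpose_rot2_mult: "transpose_mat (rot2 \<phi>) * rot2 \<phi> = 1\<^sub>m 2"
  by (simp add: rot2_def transpose_mat2 mult_mat2 one_mat2 power2_eq_square[symmetric])

lemma rot2_mult_transpose: "rot2 \<phi> * transpose_mat (rot2 \<phi>) = 1\<^sub>m 2"
  by (simp add: rot2_def transpose_mat2 mult_mat2 one_mat2 power2_eq_square[symmetric])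

lemma det_rot2: "det (rot2 \<phi>) = 1"
  by (simp add: rot2_def det_mat2 power2_eq_square[symmetric])

lemma J2_carrier [simp]: "J2 \<in> carrier_mat 2 2"
  by (simp add: J2_def)

lemma dim_J2 [simp]: "dim_row J2 = 2" "dim_col J2 = 2"
  by (simp_all add: J2_def)

lemma rot2_congruence_J2: "rot2 \<phi> * J2 * transpose_mat (rot2 \<phi>) = J2"
proof -
  have "- (sin \<phi>)\<^sup>2 - (cos \<phi>)\<^sup>2 = -1" using sin_cos_squared_add[of \<phi>] by linarith
  then show ?thesis by (simp add: rot2_def J2_def transpose_mat2 mult_mat2 power2_eq_square[symmetric])
qed

lemma rot2_congruence_symmetric:
  "rot2 \<phi> * mat2 a b b c * transpose_mat (rot2 \<phi>)
     = mat2 ((a + c) / 2 + (a - c) / 2 * cos (2 * \<phi>) + b * sin (2 * \<phi>))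
            (b * cos (2 * \<phi>) - (a - c) / 2 * sin (2 * \<phi>))
            (b * cos (2 * \<phi>) - (a - c) / 2 * sin (2 * \<phi>))
            ((a + c) / 2 - (a - c) / 2 * cos (2 * \<phi>) - b * sin (2 * \<phi>))"
proof -
  define x y where "x = cos \<phi>" and "y = sin \<phi>"
  \<comment> \<open>Weighting the trace by \<open>x\<^sup>2 + y\<^sup>2 = 1\<close> makes every entry a polynomial identity.\<close>
  have "(a + c) / 2 = (a * (x\<^sup>2 + y\<^sup>2) + c * (x\<^sup>2 + y\<^sup>2)) / 2"
    by (simp add: x_def y_def)
  then show ?thesis
    unfolding rot2_def transpose_mat2 mult_mat2 sin_double cos_double mat2_eq_iff
      x_def[symmetric] y_def[symmetric]
    by (simp add: field_simps power2_eq_square)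
qed

lemma symmetric_mat2_rot2_diagonalization:
  fixes a b c :: real
  defines "s \<equiv> sqrt ((a - c)\<^sup>2 + 4 * b\<^sup>2)"
  obtains \<phi> where "rot2 \<phi> * mat2 a b b c * transpose_mat (rot2 \<phi>)
                      = mat2 ((a + c - s) / 2) 0 0 ((a + c + s) / 2)"
proof (cases "s = 0")
  case True
  then have "a = c" "b = 0" unfolding s_def by (simp_all add: add_nonneg_eq_0_iff)
  then show ?thesis using that[of 0] True by (simp add: rot2_congruence_symmetric)
next
  case False
  moreover have "s \<ge> 0" unfolding s_def by simp
  ultimately have s_pos: "s > 0" by simp
  have s_sq: "s\<^sup>2 = (a - c)\<^sup>2 + 4 * b\<^sup>2" unfolding s_def by simp
  have "((c - a) / s)\<^sup>2 + (- 2 * b / s)\<^sup>2 = 1"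
    using s_pos by (simp add: power_divide power2_commute flip: add_divide_distrib s_sq)
  then obtain t where cos_t: "(c - a) / s = cos t" and sin_t: "- 2 * b / s = sin t"
    by (rule sincos_total_2pi)
  have "(a - c) / 2 * cos t + b * sin t = - ((a - c)\<^sup>2 + 4 * b\<^sup>2) / (2 * s)"
    using s_pos unfolding cos_t[symmetric] sin_t[symmetric]
    by (simp add: field_simps power2_eq_square)
  also have "\<dots> = - s / 2"
    using s_pos unfolding s_sq[symmetric] by (simp add: power2_eq_square)
  finally have diagonal: "(a - c) / 2 * cos t + b * sin t = - s / 2" .
  have off_diagonal: "b * cos t - (a - c) / 2 * sin t = 0"
    using s_pos unfolding cos_t[symmetric] sin_t[symmetric] by (simp add: field_simps)
  have double_half: "2 * (t / 2) = t" by simp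
  have "rot2 (t / 2) * mat2 a b b c * transpose_mat (rot2 (t / 2))
          = mat2 ((a + c) / 2 + - s / 2) 0 0 ((a + c) / 2 - - s / 2)"
    unfolding rot2_congruence_symmetric double_half add.assoc diff_diff_eq
      diagonal off_diagonal ..
  then show ?thesis
    by (intro that[of "t / 2"]) (simp add: mat2_eq_iff field_simps)
qed

lemma four_block_mat_mat2:
  "four_block_mat (mat2 a00 a01 a10 a11) (mat2 b00 b01 b10 b11)
     (mat2 c00 c01 c10 c11) (mat2 d00 d01 d10 d11)
   = mat_of_rows_list 4 [[a00, a01, b00, b01], [a10, a11, b10, b11],
                         [c00, c01, d00, d01], [c10, c11, d10, d11]]"
  by (rule eq_matI) (auto simp: mat2_def mat_of_rows_list_def less_Suc_eq numeral_eq_Suc)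

lemma weighted_lagrange_identity:
  fixes m1 m2 m3 a b c d e f :: real
  shows "(m1 * a\<^sup>2 + m2 * c\<^sup>2 + m3 * e\<^sup>2) * (m1 * b\<^sup>2 + m2 * d\<^sup>2 + m3 * f\<^sup>2)
           - (m1 * a * b + m2 * c * d - m3 * e * f)\<^sup>2
         = m1 * m2 * (a * d - c * b)\<^sup>2 + m1 * m3 * (a * f + e * b)\<^sup>2 + m2 * m3 * (d * e + c * f)\<^sup>2"
  by (simp add: power2_eq_square algebra_simps)

lemma d1_plus_d4:
  assumes "m1 + m2 + m3 = 1"
  shows "d1 m1 m2 m3 th2 th3 + d4 m1 m2 m3 th2 th3 = 1"
  using assms unfolding d1_def d4_def cos_squared_eq by (simp add: algebra_simps)

lemma d1_d4_minus_d2_squared: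
  assumes "th1 + th2 + th3 = pi"
  shows "d1 m1 m2 m3 th2 th3 * d4 m1 m2 m3 th2 th3 - (d2 m1 m2 m3 th2 th3)\<^sup>2
           = beta m1 m2 m3 th1 th2 th3 / 36"
proof -
  have "sin th3 = sin (th2 - (th2 - th3))" by simp
  then have s3: "cos (th2 - th3) * sin th2 - cos th2 * sin (th2 - th3) = sin th3"
    by (simp only: sin_diff[of th2 "th2 - th3"]) simp
  have "sin th2 = sin ((th2 - th3) + th3)" by simp
  then have s2: "cos (th2 - th3) * sin th3 + cos th3 * sin (th2 - th3) = sin th2"
    by (simp only: sin_add) simp
  have "th1 = pi - (th2 + th3)" using assms by simp
  then have s1: "sin th2 * cos th3 + cos th2 * sin th3 = sin th1"
    by (simp add: sin_add)
  show ?thesis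
    unfolding d1_def d2_def d4_def weighted_lagrange_identity s1 s2 s3 beta_def by simp
qed

lemma Dtilde_carrier [simp]: "Dtilde m1 m2 m3 th2 th3 \<in> carrier_mat 2 2"
  by (simp add: Dtilde_def)

lemma Dtilde_rot2_diagonalization:
  assumes "m1 + m2 + m3 = 1" and "th1 + th2 + th3 = pi"
  defines "s \<equiv> sqrt (9 - beta m1 m2 m3 th1 th2 th3)"
  obtains \<phi> where "rot2 \<phi> * Dtilde m1 m2 m3 th2 th3 * transpose_mat (rot2 \<phi>)
                      = mat2 ((- 1 - s) / 2) 0 0 ((- 1 + s) / 2)"
proof -
  define a b c where "a = 1 - 3 * d1 m1 m2 m3 th2 th3" and "b = - 3 * d2 m1 m2 m3 th2 th3"
    and "c = 1 - 3 * d4 m1 m2 m3 th2 th3"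
  have trace: "a + c = - 1" using d1_plus_d4[OF assms(1), of th2 th3] unfolding a_def c_def by linarith
  have "(a - c)\<^sup>2 + 4 * b\<^sup>2
          = 9 * (d1 m1 m2 m3 th2 th3 + d4 m1 m2 m3 th2 th3)\<^sup>2
            - 36 * (d1 m1 m2 m3 th2 th3 * d4 m1 m2 m3 th2 th3 - (d2 m1 m2 m3 th2 th3)\<^sup>2)"
    unfolding a_def b_def c_def by (simp add: power2_eq_square algebra_simps)
  then have discriminant: "(a - c)\<^sup>2 + 4 * b\<^sup>2 = 9 - beta m1 m2 m3 th1 th2 th3"
    unfolding d1_plus_d4[OF assms(1)] d1_d4_minus_d2_squared[OF assms(2)] by simp
  obtain \<phi> where "rot2 \<phi> * mat2 a b b c * transpose_mat (rot2 \<phi>)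
                    = mat2 ((a + c - s) / 2) 0 0 ((a + c + s) / 2)"
    using symmetric_mat2_rot2_diagonalization[of a b c] unfolding discriminant s_def .
  then show ?thesis
    using that[of \<phi>] trace unfolding Dtilde_def a_def b_def c_def by simp
qed

lemma B2bar_four_block:
  "B2bar m1 m2 m3 th1 th2 th3 e th
     = four_block_mat (1\<^sub>m 2) (- J2) J2
         (mat2 ((2 * e * cos th - 1 - sqrt (9 - beta m1 m2 m3 th1 th2 th3)) / (2 * (1 + e * cos th))) 0
               0 ((2 * e * cos th - 1 + sqrt (9 - beta m1 m2 m3 th1 th2 th3)) / (2 * (1 + e * cos th))))"
  unfolding B2bar_def one_mat2 J2_def uminus_mat2 four_block_mat_mat2 by simp

theorem theorem3p5:
  fixes m1 m2 m3 th1 th2 th3 :: real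
  assumes "m1 > 0" and "m2 > 0" and "m3 > 0" and "m1 + m2 + m3 = 1"
    and "th1 > 0" and "th2 > 0" and "th3 > 0" and "th1 + th2 + th3 = pi"
  shows "\<exists>T. T \<in> carrier_mat 2 2 \<and> transpose_mat T * T = 1\<^sub>m 2 \<and> det T = 1
          \<and> transpose_mat (blockdiag2 T) * J4 * blockdiag2 T = J4
          \<and> (\<forall>e th. 0 \<le> e \<and> e < 1 \<longrightarrow>
               blockdiag2 T * B2 m1 m2 m3 th2 th3 e th * transpose_mat (blockdiag2 T)
                 = B2bar m1 m2 m3 th1 th2 th3 e th)"
proof -
  define s where "s = sqrt (9 - beta m1 m2 m3 th1 th2 th3)"
  obtain \<phi> where diagonal: "rot2 \<phi> * Dtilde m1 m2 m3 th2 th3 * transpose_mat (rot2 \<phi>)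
                               = mat2 ((- 1 - s) / 2) 0 0 ((- 1 + s) / 2)"
    using Dtilde_rot2_diagonalization[OF assms(4,8)] unfolding s_def .
  have symplectic: "transpose_mat (blockdiag2 (rot2 \<phi>)) * J4 * blockdiag2 (rot2 \<phi>) = J4"
    unfolding blockdiag2_def J4_def by (rule block_diagonal_symplectic) (simp_all add: transpose_rot2_mult)
  have "blockdiag2 (rot2 \<phi>) * B2 m1 m2 m3 th2 th3 e th * transpose_mat (blockdiag2 (rot2 \<phi>))
          = B2bar m1 m2 m3 th1 th2 th3 e th" for e th
  proof -
    have "rot2 \<phi> * ((1 / (1 + e * cos th)) \<cdot>\<^sub>m ((e * cos th) \<cdot>\<^sub>m 1\<^sub>m 2 + Dtilde m1 m2 m3 th2 th3))
            * transpose_mat (rot2 \<phi>)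
          = (1 / (1 + e * cos th)) \<cdot>\<^sub>m ((e * cos th) \<cdot>\<^sub>m 1\<^sub>m 2 + mat2 ((- 1 - s) / 2) 0 0 ((- 1 + s) / 2))"
      by (simp add: orthogonal_congruence_affine[OF _ rot2_mult_transpose] diagonal)
    also have "\<dots> = mat2 ((2 * e * cos th - 1 - s) / (2 * (1 + e * cos th))) 0
                          0 ((2 * e * cos th - 1 + s) / (2 * (1 + e * cos th)))"
      by (simp add: one_mat2 smult_mat2 add_mat2 mat2_eq_iff field_simps)
    finally show ?thesis
      unfolding B2_def blockdiag2_def B2bar_four_block s_def[symmetric]
      by (simp add: block_diagonal_congruence rot2_mult_transpose rot2_congruence_J2)
  qed
  then show ?thesis
    using symplectic transpose_rot2_mult det_rot2 rot2_carrier by blast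
qed

end
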